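(* Let $K$ be a positive integer, and let each of $N$ and $J$ be either a positive integer or $\infty$; write $[N]=\{1,\dots,N\}$ (with $[N]=\mathbb{Z}_+$ if $N=\infty$), and similarly for $[J]$. Let $\Theta=[\Theta_1,\dots,\Theta_K]$ with $\Theta_k:[N]\to\mathbb{R}$, let $A=[A_1,\dots,A_K]$ with $A_k:[J]\to\mathbb{R}$, let $Q=[Q_1,\dots,Q_K]$ with $Q_k:[J]\to\{0,1\}$, and let $M=\Theta A^T$, i.e. $M(i,j)=\sum_{k=1}^K\Theta_k(i)A_k(j)$. Suppose $(\Theta,A)$ satisfies the Model Assumptions (1)–(4) relative to $Q$ (see context), and suppose $\operatorname{supp}(Q_k)$ is non-empty for every $k$. Then for each $k\in\{1,\dots,K\}$, the factor loading $A_k$ is identifiable if and only if no $k'\neq k$ masks $k$.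
   Context: For $S\subset\{1,\dots,K\}$, $\mathcal{R}(S)\subset[J]$ is the set of indices $j$ such that $Q_k(j)=1$ for all $k\in S$ and $Q_k(j)=0$ for all $k\notin S$. For $\mathcal{R}\subset[J]$ and $S\subset\{1,\dots,K\}$, $A_{[\mathcal{R},S]}$ is the submatrix of $A$ with rows in $\mathcal{R}$ and columns in $S$. $\operatorname{supp}(Q_k)=\{j: Q_k(j)=1\}$. We say $k'$ masks $k$ if $\operatorname{supp}(Q_{k'})\subset\operatorname{supp}(Q_k)$. Model Assumptions for a pair $(\Theta,A)$ relative to $Q$: (1) the columns $\Theta_1,\dots,\Theta_K$ are linearly independent; (2) for every $S\subset\{1,\dots,K\}$ with $\mathcal{R}(S)$ non-empty, the columns of $A_{[\mathcal{R}(S),S]}$ are linearly independent; (3) for every $k$, $A_k(j)=0$ whenever $Q_k(j)=0$; (4) there is a constant $C>0$ with $\sup_{k,i}|\Theta_k(i)|<C$ and $\sup_{k,j}|A_k(j)|<C$. $A_k$ is identifiable if for every decomposition $M=\widetilde\Theta\widetilde A^T$ (with $\widetilde\Theta=[\widetilde\Theta_1,\dots,\widetilde\Theta_K]$, $\widetilde\Theta_k:[N]\to\mathbb{R}$, $\widetilde A=[\widetilde A_1,\dots,\widetilde A_K]$, $\widetilde A_k:[J]\to\mathbb{R}$) such that $(\widetilde\Theta,\widetilde A)$ satisfies Model Assumptions (1)–(4) relative to the same $Q$, the vectors $A_k$ and $\widetilde A_k$ are linearly dependent. *)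

theory Defs
  imports Main "HOL-Library.Extended_Nat"
begin

definition idx :: "enat \<Rightarrow> nat set" where
  "idx N = {i. 1 \<le> i \<and> enat i \<le> N}"

text \<open>A factor matrix is a function k \<mapsto> (column k); only k \<in> {1..K} and
  rows in the relevant index set matter. Q k j is the 0/1 entry (True = 1).\<close>

definition supp :: "enat \<Rightarrow> (nat \<Rightarrow> nat \<Rightarrow> bool) \<Rightarrow> nat \<Rightarrow> nat set" where
  "supp J Q k = {j \<in> idx J. Q k j}"

definition R_set :: "enat \<Rightarrow> nat \<Rightarrow> (nat \<Rightarrow> nat \<Rightarrow> bool) \<Rightarrow> nat set \<Rightarrow> nat set" where
  "R_set J K Q S = {j \<in> idx J. (\<forall>k\<in>S. Q k j) \<and> (\<forall>k\<in>{1..K} - S. \<not> Q k j)}"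

definition masks :: "enat \<Rightarrow> (nat \<Rightarrow> nat \<Rightarrow> bool) \<Rightarrow> nat \<Rightarrow> nat \<Rightarrow> bool" where
  "masks J Q k' k \<longleftrightarrow> supp J Q k' \<subseteq> supp J Q k"

definition cols_lin_indep :: "nat set \<Rightarrow> nat set \<Rightarrow> (nat \<Rightarrow> nat \<Rightarrow> real) \<Rightarrow> bool" where
  "cols_lin_indep I S F \<longleftrightarrow>
     (\<forall>c :: nat \<Rightarrow> real. (\<forall>i\<in>I. (\<Sum>k\<in>S. c k * F k i) = 0) \<longrightarrow> (\<forall>k\<in>S. c k = 0))"

definition model_assumptions ::
  "enat \<Rightarrow> enat \<Rightarrow> nat \<Rightarrow> (nat \<Rightarrow> nat \<Rightarrow> bool) \<Rightarrow> (nat \<Rightarrow> nat \<Rightarrow> real) \<Rightarrow> (nat \<Rightarrow> nat \<Rightarrow> real) \<Rightarrow> bool"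
  where
  "model_assumptions N J K Q Theta A \<longleftrightarrow>
     cols_lin_indep (idx N) {1..K} Theta \<and>
     (\<forall>S\<subseteq>{1..K}. R_set J K Q S \<noteq> {} \<longrightarrow> cols_lin_indep (R_set J K Q S) S A) \<and>
     (\<forall>k\<in>{1..K}. \<forall>j\<in>idx J. \<not> Q k j \<longrightarrow> A k j = 0) \<and>
     (\<exists>C>0. (\<forall>k\<in>{1..K}. \<forall>i\<in>idx N. \<bar>Theta k i\<bar> < C) \<and>
            (\<forall>k\<in>{1..K}. \<forall>j\<in>idx J. \<bar>A k j\<bar> < C))"

definition decomposes ::
  "enat \<Rightarrow> enat \<Rightarrow> nat \<Rightarrow> (nat \<Rightarrow> nat \<Rightarrow> real) \<Rightarrow> (nat \<Rightarrow> nat \<Rightarrow> real) \<Rightarrow> (nat \<Rightarrow> nat \<Rightarrow> real) \<Rightarrow> bool"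
  where
  "decomposes N J K M Theta A \<longleftrightarrow>
     (\<forall>i\<in>idx N. \<forall>j\<in>idx J. M i j = (\<Sum>k\<in>{1..K}. Theta k i * A k j))"

definition lin_dependent2 :: "nat set \<Rightarrow> (nat \<Rightarrow> real) \<Rightarrow> (nat \<Rightarrow> real) \<Rightarrow> bool" where
  "lin_dependent2 I u v \<longleftrightarrow> (\<exists>a b. (a \<noteq> 0 \<or> b \<noteq> 0) \<and> (\<forall>j\<in>I. a * u j + b * v j = 0))"

definition identifiable ::
  "enat \<Rightarrow> enat \<Rightarrow> nat \<Rightarrow> (nat \<Rightarrow> nat \<Rightarrow> bool) \<Rightarrow> (nat \<Rightarrow> nat \<Rightarrow> real) \<Rightarrow> (nat \<Rightarrow> nat \<Rightarrow> real) \<Rightarrow> nat \<Rightarrow> bool"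
  where
  "identifiable N J K Q M A k \<longleftrightarrow>
     (\<forall>Theta' A'. decomposes N J K M Theta' A' \<and> model_assumptions N J K Q Theta' A'
        \<longrightarrow> lin_dependent2 (idx J) (A k) (A' k))"

end

(*
  If no k' masks k, let (Theta', A') be any second decomposition. The columns of Theta' are
  independent, so Gaussian elimination on finitely many rows writes the k-th unit vector as a
  combination of rows of Theta'; applying that combination to M = Theta A^T = Theta' A'^T shows
  A'_k = sum_m u_m A_m on [J]. For m \<noteq> k pick a row j with Q_m(j) = 1 and Q_k(j) = 0: on the rows
  sharing the Q-pattern S of j, both A'_k and every A_l with l \<notin> S vanish, so assumption (2)
  for S forces u_m = 0, and A'_k = u_k A_k.

  If k' masks k, replacing A_k by A_k + A_k' and Theta_k' by Theta_k' - Theta_k gives a second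
  decomposition; it keeps the zero pattern of Q because supp Q_k' \<subseteq> supp Q_k. But A_k and
  A_k + A_k' are independent on the rows sharing the Q-pattern of any row in supp Q_k'.
*)
theory Submission
  imports Defs
begin

inductive_set row_space :: "nat set \<Rightarrow> (nat \<Rightarrow> nat \<Rightarrow> real) \<Rightarrow> (nat \<Rightarrow> real) set"
  for I F where
  row: "i \<in> I \<Longrightarrow> (\<lambda>k. F k i) \<in> row_space I F"
| zero: "(\<lambda>k. 0) \<in> row_space I F"
| add: "v \<in> row_space I F \<Longrightarrow> w \<in> row_space I F \<Longrightarrow> (\<lambda>k. v k + w k) \<in> row_space I F"
| scale: "v \<in> row_space I F \<Longrightarrow> (\<lambda>k. c * v k) \<in> row_space I F"

lemma row_space_diff:
  assumes "v \<in> row_space I F" "w \<in> row_space I F"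
  shows "(\<lambda>k. v k - w k) \<in> row_space I F"
  using row_space.add[OF assms(1) row_space.scale[OF assms(2), of "-1"]] by simp

lemma row_space_sum:
  assumes "\<And>l. l \<in> S \<Longrightarrow> f l \<in> row_space I F"
  shows "(\<lambda>k. \<Sum>l\<in>S. f l k) \<in> row_space I F"
  using assms
proof (induction S rule: infinite_finite_induct)
  case (insert l S)
  then show ?case
    using row_space.add[of "f l" I F "\<lambda>k. \<Sum>l\<in>S. f l k"] by simp
qed (simp_all add: row_space.zero)

lemma cols_lin_indep_subset:
  assumes "cols_lin_indep I S F" "T \<subseteq> S" "finite S"
  shows "cols_lin_indep I T F"
  unfolding cols_lin_indep_def
proof (intro allI impI)
  fix c :: "nat \<Rightarrow> real"
  assume c: "\<forall>i\<in>I. (\<Sum>k\<in>T. c k * F k i) = 0"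
  define c' where "c' k = (if k \<in> T then c k else 0)" for k
  have "(\<Sum>k\<in>S. c' k * F k i) = (\<Sum>k\<in>T. c k * F k i)" for i
    using assms(2,3) by (intro sum.mono_neutral_cong_right) (auto simp: c'_def)
  then have "\<forall>k\<in>S. c' k = 0"
    using assms(1) c unfolding cols_lin_indep_def by metis
  then show "\<forall>k\<in>T. c k = 0"
    using assms(2) by (force simp: c'_def)
qed

lemma cols_lin_indep_not_combination:
  assumes "cols_lin_indep I (insert x S) F" "finite S" "x \<notin> S"
  shows "\<exists>i\<in>I. F x i \<noteq> (\<Sum>l\<in>S. w l * F l i)"
proof (rule ccontr)
  assume combination: "\<not> ?thesis"
  define c where "c k = (if k \<in> S then - w k else 1)" for k
  have "(\<Sum>k\<in>insert x S. c k * F k i) = F x i - (\<Sum>l\<in>S. w l * F l i)" for i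
    using assms(2,3) by (simp add: c_def sum_negf cong: sum.cong)
  then have "\<forall>k\<in>insert x S. c k = 0"
    using assms(1) combination unfolding cols_lin_indep_def by auto
  then show False
    using assms(3) by (simp add: c_def)
qed

lemma unit_vector_in_row_space:
  assumes "finite S" "cols_lin_indep I S F" "l \<in> S"
  shows "\<exists>v\<in>row_space I F. \<forall>k\<in>S. v k = of_bool (k = l)"
  using assms
proof (induction S arbitrary: l rule: finite_induct)
  case empty
  then show ?case by simp
next
  case (insert x S)
  have "cols_lin_indep I S F"
    using insert.hyps(1) by (intro cols_lin_indep_subset[OF insert.prems(1)]) auto
  then have "\<forall>l\<in>S. \<exists>v\<in>row_space I F. \<forall>k\<in>S. v k = of_bool (k = l)"
    using insert.IH by blast
  then obtain E where E_row: "\<And>l. l \<in> S \<Longrightarrow> E l \<in> row_space I F"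
    and E_unit: "\<And>l k. l \<in> S \<Longrightarrow> k \<in> S \<Longrightarrow> E l k = of_bool (k = l)"
    by metis
  \<comment> \<open>Clearing the S-coordinates with the unit vectors E; a row whose x-coordinate
    survives clearing is the pivot for x.\<close>
  define clear where "clear v k = v k - (\<Sum>l\<in>S. v l * E l k)" for v :: "nat \<Rightarrow> real" and k
  have clear_row: "clear v \<in> row_space I F" if "v \<in> row_space I F" for v
    unfolding clear_def using that E_row
    by (intro row_space_diff row_space_sum row_space.scale)
  have clear_S: "clear v k = 0" if "k \<in> S" for v k
    using that insert.hyps(1) by (simp add: clear_def E_unit cong: sum.cong)
  obtain i0 where "i0 \<in> I" and pivot: "clear (\<lambda>k. F k i0) x \<noteq> 0"
    using cols_lin_indep_not_combination[OF insert.prems(1) insert.hyps, of "\<lambda>l. E l x"]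
    by (auto simp: clear_def mult.commute)
  define e where "e k = clear (\<lambda>k. F k i0) k / clear (\<lambda>k. F k i0) x" for k
  have "(\<lambda>k. inverse (clear (\<lambda>k. F k i0) x) * clear (\<lambda>k. F k i0) k) \<in> row_space I F"
    using \<open>i0 \<in> I\<close> by (intro row_space.scale clear_row row_space.row)
  then have e_row: "e \<in> row_space I F"
    unfolding e_def[abs_def] by (simp add: divide_inverse mult.commute)
  have e_unit: "e k = of_bool (k = x)" if "k \<in> insert x S" for k
    using that pivot clear_S by (auto simp: e_def)
  show ?case
  proof (cases "l = x")
    case True
    then show ?thesis using e_row e_unit by blast
  next
    case False
    then have "l \<in> S" using insert.prems(2) by simp
    have "(\<lambda>k. E l k - E l x * e k) \<in> row_space I F"
      using row_space_diff[OF E_row[OF \<open>l \<in> S\<close>] row_space.scale[OF e_row]] .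
    moreover have "E l k - E l x * e k = of_bool (k = l)" if "k \<in> insert x S" for k
      using that \<open>l \<in> S\<close> insert.hyps(2) e_unit E_unit by auto
    ultimately show ?thesis
      by (intro bexI[where x = "\<lambda>k. E l k - E l x * e k"]) simp_all
  qed
qed

lemma cols_lin_indep_cong:
  assumes "cols_lin_indep I S F" "\<And>k i. k \<in> S \<Longrightarrow> i \<in> I \<Longrightarrow> G k i = F k i"
  shows "cols_lin_indep I S G"
  using assms unfolding cols_lin_indep_def by (simp cong: sum.cong)

lemma cols_lin_indep_add_column:
  assumes "cols_lin_indep I S F" "finite S" "k \<in> S" "k' \<in> S" "k \<noteq> k'"
  shows "cols_lin_indep I S (F(k := \<lambda>i. F k i + a * F k' i))"
  unfolding cols_lin_indep_def
proof (intro allI impI)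
  fix c :: "nat \<Rightarrow> real"
  assume c: "\<forall>i\<in>I. (\<Sum>l\<in>S. c l * (F(k := \<lambda>i. F k i + a * F k' i)) l i) = 0"
  define c' where "c' = c(k' := c k' + a * c k)"
  have "(\<Sum>l\<in>S. c' l * F l i) = (\<Sum>l\<in>S. c l * (F(k := \<lambda>i. F k i + a * F k' i)) l i)" for i
  proof -
    have "(\<Sum>l\<in>S. c' l * F l i) = (\<Sum>l\<in>S. c l * F l i + of_bool (l = k') * (a * c k * F k' i))"
      by (intro sum.cong) (auto simp: c'_def algebra_simps)
    also have "\<dots> = (\<Sum>l\<in>S. c l * F l i + of_bool (l = k) * (a * c k * F k' i))"
      using assms(2-4) by (simp add: sum.distrib)
    also have "\<dots> = (\<Sum>l\<in>S. c l * (F(k := \<lambda>i. F k i + a * F k' i)) l i)"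
      by (intro sum.cong) (auto simp: algebra_simps)
    finally show ?thesis .
  qed
  then have "\<forall>l\<in>S. c' l = 0"
    using assms(1) c unfolding cols_lin_indep_def by metis
  then have "c k = 0" and "c k' + a * c k = 0"
    using assms(3-5) by (auto simp: c'_def)
  then show "\<forall>l\<in>S. c l = 0"
    using \<open>\<forall>l\<in>S. c' l = 0\<close> by (auto simp: c'_def split: if_splits)
qed

lemma cols_lin_indep_not_lin_dependent2:
  assumes "cols_lin_indep I S F" "finite S" "k \<in> S" "k' \<in> S" "k \<noteq> k'"
  shows "\<not> lin_dependent2 I (F k) (F k')"
proof
  assume "lin_dependent2 I (F k) (F k')"
  then obtain \<alpha> \<beta> where "\<alpha> \<noteq> 0 \<or> \<beta> \<noteq> 0" and dep: "\<forall>i\<in>I. \<alpha> * F k i + \<beta> * F k' i = 0"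
    unfolding lin_dependent2_def by blast
  define c where "c l = (if l = k then \<alpha> else if l = k' then \<beta> else 0)" for l
  have "(\<Sum>l\<in>S. c l * F l i) = \<alpha> * F k i + \<beta> * F k' i" for i
  proof -
    have "(\<Sum>l\<in>S. c l * F l i) = (\<Sum>l\<in>S. of_bool (l = k) * (\<alpha> * F k i) + of_bool (l = k') * (\<beta> * F k' i))"
      using assms(5) by (intro sum.cong) (auto simp: c_def)
    then show ?thesis
      using assms(2-4) by (simp add: sum.distrib)
  qed
  then have "\<forall>l\<in>S. c l = 0"
    using assms(1) dep unfolding cols_lin_indep_def by metis
  then show False
    using \<open>\<alpha> \<noteq> 0 \<or> \<beta> \<noteq> 0\<close> assms(3-5) by (auto simp: c_def)
qed

lemma lin_dependent2_subset:
  assumes "lin_dependent2 I u v" "I' \<subseteq> I"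
  shows "lin_dependent2 I' u v"
  using assms unfolding lin_dependent2_def by blast

lemma lin_dependent2_add_mult_right:
  assumes "lin_dependent2 I u (\<lambda>i. u i + a * v i)" "a \<noteq> 0"
  shows "lin_dependent2 I u v"
proof -
  obtain \<alpha> \<beta> where "\<alpha> \<noteq> 0 \<or> \<beta> \<noteq> 0" and "\<forall>i\<in>I. \<alpha> * u i + \<beta> * (u i + a * v i) = 0"
    using assms(1) unfolding lin_dependent2_def by blast
  then have "(\<alpha> + \<beta> \<noteq> 0 \<or> \<beta> * a \<noteq> 0) \<and> (\<forall>i\<in>I. (\<alpha> + \<beta>) * u i + (\<beta> * a) * v i = 0)"
    using assms(2) by (auto simp: algebra_simps)
  then show ?thesis
    unfolding lin_dependent2_def by blast
qed

lemma abs_add_mult_less: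
  fixes x y :: real
  assumes "\<bar>x\<bar> < C" "\<bar>y\<bar> < C"
  shows "\<bar>x + b * y\<bar> < (1 + \<bar>b\<bar>) * C"
proof -
  have "\<bar>x + b * y\<bar> \<le> \<bar>x\<bar> + \<bar>b\<bar> * \<bar>y\<bar>"
    by (metis abs_mult abs_triangle_ineq)
  also have "\<dots> < C + \<bar>b\<bar> * C"
    using assms by (intro add_less_le_mono mult_left_mono) auto
  finally show ?thesis by (simp add: algebra_simps)
qed

lemma mem_R_set_pattern:
  assumes "j \<in> idx J"
  shows "j \<in> R_set J K Q {l\<in>{1..K}. Q l j}"
  using assms unfolding R_set_def by auto

lemma model_assumptionsD:
  assumes "model_assumptions N J K Q Theta A"
  shows "cols_lin_indep (idx N) {1..K} Theta"
    and "S \<subseteq> {1..K} \<Longrightarrow> R_set J K Q S \<noteq> {} \<Longrightarrow> cols_lin_indep (R_set J K Q S) S A"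
    and "k \<in> {1..K} \<Longrightarrow> j \<in> idx J \<Longrightarrow> \<not> Q k j \<Longrightarrow> A k j = 0"
    and "\<exists>C>0. (\<forall>k\<in>{1..K}. \<forall>i\<in>idx N. \<bar>Theta k i\<bar> < C) \<and> (\<forall>k\<in>{1..K}. \<forall>j\<in>idx J. \<bar>A k j\<bar> < C)"
  using assms unfolding model_assumptions_def by auto

lemma model_assumptions_cols_lin_indep_pattern:
  assumes "model_assumptions N J K Q Theta A" "j \<in> idx J"
  shows "cols_lin_indep (R_set J K Q {l\<in>{1..K}. Q l j}) {l\<in>{1..K}. Q l j} A"
  using mem_R_set_pattern[OF assms(2)] by (intro model_assumptionsD(2)[OF assms(1)]) auto

lemma masksD:
  assumes "masks J Q k' k" "j \<in> idx J" "Q k' j"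
  shows "Q k j"
  using assms unfolding masks_def supp_def by blast

lemma row_space_combination_in_column_span:
  assumes "decomposes N J K M Theta A" "decomposes N J K M Theta' A'"
    and "v \<in> row_space (idx N) Theta'"
  shows "\<exists>u. \<forall>j\<in>idx J. (\<Sum>l\<in>{1..K}. v l * A' l j) = (\<Sum>l\<in>{1..K}. u l * A l j)"
  using assms(3)
proof induction
  case (row i)
  then show ?case
    using assms(1,2) unfolding decomposes_def by (intro exI[of _ "\<lambda>l. Theta l i"]) metis
next
  case zero
  then show ?case by (intro exI[of _ "\<lambda>l. 0"]) simp
next
  case (add v w)
  then obtain u1 u2
    where "\<forall>j\<in>idx J. (\<Sum>l\<in>{1..K}. v l * A' l j) = (\<Sum>l\<in>{1..K}. u1 l * A l j)"
      and "\<forall>j\<in>idx J. (\<Sum>l\<in>{1..K}. w l * A' l j) = (\<Sum>l\<in>{1..K}. u2 l * A l j)"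
    by blast
  then show ?case
    by (auto intro!: exI[of _ "\<lambda>l. u1 l + u2 l"] simp: distrib_right sum.distrib)
next
  case (scale v c)
  then obtain u where "\<forall>j\<in>idx J. (\<Sum>l\<in>{1..K}. v l * A' l j) = (\<Sum>l\<in>{1..K}. u l * A l j)"
    by blast
  then show ?case
    by (auto intro!: exI[of _ "\<lambda>l. c * u l"] simp: mult.assoc sum_distrib_left[symmetric])
qed

lemma column_in_column_span:
  assumes "decomposes N J K M Theta A" "decomposes N J K M Theta' A'"
    and "cols_lin_indep (idx N) {1..K} Theta'" "k \<in> {1..K}"
  shows "\<exists>u. \<forall>j\<in>idx J. A' k j = (\<Sum>l\<in>{1..K}. u l * A l j)"
proof -
  obtain v where "v \<in> row_space (idx N) Theta'" and v: "\<forall>l\<in>{1..K}. v l = of_bool (l = k)"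
    using unit_vector_in_row_space[OF _ assms(3,4)] by auto
  then obtain u where "\<forall>j\<in>idx J. (\<Sum>l\<in>{1..K}. v l * A' l j) = (\<Sum>l\<in>{1..K}. u l * A l j)"
    using row_space_combination_in_column_span[OF assms(1,2)] by blast
  moreover have "(\<Sum>l\<in>{1..K}. v l * A' l j) = A' k j" for j
  proof -
    have "(\<Sum>l\<in>{1..K}. v l * A' l j) = (\<Sum>l\<in>{1..K}. of_bool (l = k) * A' l j)"
      using v by (intro sum.cong) auto
    also have "\<dots> = A' k j"
      using assms(4) by simp
    finally show ?thesis .
  qed
  ultimately show ?thesis by auto
qed

lemma coefficient_eq_zero_if_not_masks:
  assumes "model_assumptions N J K Q Theta A"
    and "\<forall>j\<in>idx J. \<not> Q k j \<longrightarrow> B j = 0"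
    and "\<forall>j\<in>idx J. B j = (\<Sum>l\<in>{1..K}. u l * A l j)"
    and "k \<in> {1..K}" "m \<in> {1..K}" "\<not> masks J Q m k"
  shows "u m = 0"
proof -
  obtain j where j: "j \<in> idx J" "Q m j" "\<not> Q k j"
    using assms(6) unfolding masks_def supp_def by blast
  define S where "S = {l\<in>{1..K}. Q l j}"
  have "(\<Sum>l\<in>S. u l * A l j') = 0" if "j' \<in> R_set J K Q S" for j'
  proof -
    have "j' \<in> idx J" and off: "\<forall>l\<in>{1..K} - S. \<not> Q l j'" and "\<not> Q k j'"
      using that j(3) assms(4) unfolding R_set_def S_def by auto
    have "(\<Sum>l\<in>S. u l * A l j') = (\<Sum>l\<in>{1..K}. u l * A l j')"
      using off model_assumptionsD(3)[OF assms(1) _ \<open>j' \<in> idx J\<close>]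
      by (intro sum.mono_neutral_left) (auto simp: S_def)
    also have "\<dots> = 0"
      using assms(2,3) \<open>j' \<in> idx J\<close> \<open>\<not> Q k j'\<close> by simp
    finally show ?thesis .
  qed
  then have "\<forall>l\<in>S. u l = 0"
    using model_assumptions_cols_lin_indep_pattern[OF assms(1) j(1)]
    unfolding cols_lin_indep_def S_def by blast
  then show ?thesis
    using assms(5) j(2) by (auto simp: S_def)
qed

lemma identifiable_if_unmasked:
  assumes "decomposes N J K M Theta A" "model_assumptions N J K Q Theta A" "k \<in> {1..K}"
    and "\<not> (\<exists>k'\<in>{1..K}. k' \<noteq> k \<and> masks J Q k' k)"
  shows "identifiable N J K Q M A k"
  unfolding identifiable_def
proof (intro allI impI, elim conjE)
  fix Theta' A'
  assume dec': "decomposes N J K M Theta' A'" and ma': "model_assumptions N J K Q Theta' A'"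
  obtain u where u: "\<forall>j\<in>idx J. A' k j = (\<Sum>l\<in>{1..K}. u l * A l j)"
    using column_in_column_span[OF assms(1) dec' model_assumptionsD(1)[OF ma'] assms(3)] by blast
  have "u l = 0" if "l \<in> {1..K}" "l \<noteq> k" for l
    using model_assumptionsD(3)[OF ma' assms(3)] assms(4) that
    by (intro coefficient_eq_zero_if_not_masks[OF assms(2) _ u assms(3)]) auto
  then have "(\<Sum>l\<in>{1..K}. u l * A l j) = u k * A k j" for j
    using assms(3) by (subst sum.mono_neutral_right[of "{1..K}" "{k}"]) auto
  then have "\<forall>j\<in>idx J. A' k j = u k * A k j"
    using u by simp
  then show "lin_dependent2 (idx J) (A k) (A' k)"
    unfolding lin_dependent2_def by (intro exI[of _ "u k"] exI[of _ "-1"]) simp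
qed

lemma decomposes_shear:
  assumes "decomposes N J K M Theta A" "k \<in> {1..K}" "k' \<in> {1..K}" "k \<noteq> k'"
  shows "decomposes N J K M (Theta(k' := \<lambda>i. Theta k' i - a * Theta k i)) (A(k := \<lambda>j. A k j + a * A k' j))"
  unfolding decomposes_def
proof (intro ballI)
  fix i j assume "i \<in> idx N" "j \<in> idx J"
  let ?d = "a * Theta k i * A k' j"
  have "(\<Sum>l\<in>{1..K}. (Theta(k' := \<lambda>i. Theta k' i - a * Theta k i)) l i * (A(k := \<lambda>j. A k j + a * A k' j)) l j)
      = (\<Sum>l\<in>{1..K}. Theta l i * A l j + of_bool (l = k) * ?d - of_bool (l = k') * ?d)"
    using assms(4) by (intro sum.cong) (auto simp: algebra_simps)
  also have "\<dots> = (\<Sum>l\<in>{1..K}. Theta l i * A l j)"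
    using assms(2,3) by (simp add: sum.distrib sum_subtractf)
  finally show "M i j = (\<Sum>l\<in>{1..K}. (Theta(k' := \<lambda>i. Theta k' i - a * Theta k i)) l i * (A(k := \<lambda>j. A k j + a * A k' j)) l j)"
    using assms(1) \<open>i \<in> idx N\<close> \<open>j \<in> idx J\<close> unfolding decomposes_def by simp
qed

lemma cols_lin_indep_R_set_add_column:
  assumes ma: "model_assumptions N J K Q Theta A"
    and "k' \<in> {1..K}" "k \<noteq> k'" "S \<subseteq> {1..K}" "R_set J K Q S \<noteq> {}"
  shows "cols_lin_indep (R_set J K Q S) S (A(k := \<lambda>j. A k j + a * A k' j))"
proof -
  have indep: "cols_lin_indep (R_set J K Q S) S A"
    using model_assumptionsD(2)[OF ma assms(4,5)] .
  show ?thesis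
  proof (cases "k \<in> S \<and> k' \<in> S")
    case True
    then show ?thesis
      using cols_lin_indep_add_column[OF indep] assms(3,4) finite_subset by blast
  next
    case False
    have "(A(k := \<lambda>j. A k j + a * A k' j)) l j = A l j" if "l \<in> S" "j \<in> R_set J K Q S" for l j
      using False that assms(2) model_assumptionsD(3)[OF ma assms(2)]
      unfolding R_set_def by auto
    then show ?thesis
      using cols_lin_indep_cong[OF indep] by blast
  qed
qed

lemma model_assumptions_shear:
  assumes ma: "model_assumptions N J K Q Theta A"
    and "k \<in> {1..K}" "k' \<in> {1..K}" "k \<noteq> k'" "masks J Q k' k"
  shows "model_assumptions N J K Q (Theta(k' := \<lambda>i. Theta k' i - a * Theta k i)) (A(k := \<lambda>j. A k j + a * A k' j))"
    (is "model_assumptions N J K Q ?Theta ?A")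
proof -
  have "cols_lin_indep (idx N) {1..K} ?Theta"
    using cols_lin_indep_add_column[OF model_assumptionsD(1)[OF ma], of k' k "-a"] assms(2-4)
    by simp
  moreover have "cols_lin_indep (R_set J K Q S) S ?A"
    if "S \<subseteq> {1..K}" "R_set J K Q S \<noteq> {}" for S
    using cols_lin_indep_R_set_add_column[OF ma assms(3,4) that] .
  moreover have "?A l j = 0" if "l \<in> {1..K}" "j \<in> idx J" "\<not> Q l j" for l j
  proof (cases "l = k")
    case True
    then have "A k j = 0" "A k' j = 0"
      using that assms(3) model_assumptionsD(3)[OF ma] masksD[OF assms(5)] by blast+
    then show ?thesis using True by simp
  qed (use that model_assumptionsD(3)[OF ma] in auto)
  moreover obtain C where "C > 0"
    and Theta_bound: "\<forall>l\<in>{1..K}. \<forall>i\<in>idx N. \<bar>Theta l i\<bar> < C"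
    and A_bound: "\<forall>l\<in>{1..K}. \<forall>j\<in>idx J. \<bar>A l j\<bar> < C"
    using model_assumptionsD(4)[OF ma] by blast
  have C_le: "C \<le> (1 + \<bar>a\<bar>) * C"
    using \<open>C > 0\<close> by (simp add: distrib_right)
  have "\<exists>C>0. (\<forall>l\<in>{1..K}. \<forall>i\<in>idx N. \<bar>?Theta l i\<bar> < C) \<and> (\<forall>l\<in>{1..K}. \<forall>j\<in>idx J. \<bar>?A l j\<bar> < C)"
    using \<open>C > 0\<close> Theta_bound A_bound assms(2,3)
      abs_add_mult_less[where C = C and b = "-a"] abs_add_mult_less[where C = C and b = a]
    by (intro exI[of _ "(1 + \<bar>a\<bar>) * C"]) (auto intro: less_le_trans[OF _ C_le])
  ultimately show ?thesis
    unfolding model_assumptions_def by blast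
qed

lemma not_identifiable_if_masked:
  assumes "decomposes N J K M Theta A" "model_assumptions N J K Q Theta A"
    and "k \<in> {1..K}" "k' \<in> {1..K}" "k \<noteq> k'" "masks J Q k' k" "supp J Q k' \<noteq> {}"
  shows "\<not> identifiable N J K Q M A k"
proof
  assume "identifiable N J K Q M A k"
  moreover have "decomposes N J K M (Theta(k' := \<lambda>i. Theta k' i - 1 * Theta k i)) (A(k := \<lambda>j. A k j + 1 * A k' j))"
    by (rule decomposes_shear[OF assms(1,3-5)])
  moreover have "model_assumptions N J K Q (Theta(k' := \<lambda>i. Theta k' i - 1 * Theta k i)) (A(k := \<lambda>j. A k j + 1 * A k' j))"
    by (rule model_assumptions_shear[OF assms(2-6)])
  ultimately have "lin_dependent2 (idx J) (A k) ((A(k := \<lambda>j. A k j + 1 * A k' j)) k)"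
    unfolding identifiable_def by blast
  then have "lin_dependent2 (idx J) (A k) (\<lambda>j. A k j + 1 * A k' j)"
    by simp
  then have dep: "lin_dependent2 (idx J) (A k) (A k')"
    by (rule lin_dependent2_add_mult_right) simp
  obtain j where "j \<in> idx J" "Q k' j"
    using assms(7) unfolding supp_def by blast
  define S where "S = {l\<in>{1..K}. Q l j}"
  have "k \<in> S" "k' \<in> S"
    using masksD[OF assms(6)] \<open>j \<in> idx J\<close> \<open>Q k' j\<close> assms(3,4) by (auto simp: S_def)
  moreover have "cols_lin_indep (R_set J K Q S) S A"
    using model_assumptions_cols_lin_indep_pattern[OF assms(2) \<open>j \<in> idx J\<close>] by (simp add: S_def)
  moreover have "lin_dependent2 (R_set J K Q S) (A k) (A k')"
    using dep by (rule lin_dependent2_subset) (auto simp: R_set_def)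
  ultimately show False
    using cols_lin_indep_not_lin_dependent2[of _ S A k k'] assms(5) by (simp add: S_def)
qed

theorem theorem2:
  fixes K :: nat and N J :: enat
    and Theta A M :: "nat \<Rightarrow> nat \<Rightarrow> real" and Q :: "nat \<Rightarrow> nat \<Rightarrow> bool"
  assumes "K \<ge> 1" and "N \<ge> 1" and "J \<ge> 1"
    and "decomposes N J K M Theta A"
    and "model_assumptions N J K Q Theta A"
    and "\<forall>k\<in>{1..K}. supp J Q k \<noteq> {}"
    and "k \<in> {1..K}"
  shows "identifiable N J K Q M A k \<longleftrightarrow> \<not> (\<exists>k'\<in>{1..K}. k' \<noteq> k \<and> masks J Q k' k)"
  using identifiable_if_unmasked[OF assms(4,5,7)] not_identifiable_if_masked[OF assms(4,5,7)] assms(6)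
  by blast

end
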